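(* Let $\mathbf{a}\in\mathbb{C}^n$, $\beta>0$ and $f(\mathbf{z})=\frac12|\mathbf{a}^*\mathbf{z}|^2+\frac{\beta}{2}\|\mathbf{z}\|_4^4$ on $\mathbb{CS}^{n-1}$. Suppose $\mathbf{z},\mathbf{y}\in\mathbb{CS}^{n-1}$ are two consistent local minimizers of $f$ on $\mathbb{CS}^{n-1}$ with $\mathbf{a}^*\mathbf{z}\neq0$ and $\mathbf{a}^*\mathbf{y}\neq0$. Then $|y_k|=|z_k|$ for all $k\in[n]$.
   Context: $\mathbb{CS}^{n-1}=\{\mathbf{z}\in\mathbb{C}^n:\|\mathbf{z}\|_2=1\}$. A stationary point $\mathbf{z}$ (i.e. $(\mathbf{a}^*\mathbf{z})\mathbf{a}+2\beta\,\mathrm{diag}(|z_1|^2,\dots,|z_n|^2)\mathbf{z}=2\lambda\mathbf{z}$ with $2\lambda=|\mathbf{a}^*\mathbf{z}|^2+2\beta\|\mathbf{z}\|_4^4$) is called consistent if $\bar a_kz_k\in\mathbb{R}$ for all $k$ with $a_k\neq0$ and $z_k\in\mathbb{R}$ for all $k$ with $a_k=0$. *)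

theory Defs
  imports "HOL-Analysis.Analysis"
begin

definition inner_aH :: "complex ^ 'n \<Rightarrow> complex ^ 'n \<Rightarrow> complex" where
  "inner_aH a z = (\<Sum>k\<in>UNIV. cnj (a $ k) * z $ k)"

definition csphere :: "(complex ^ 'n) set" where
  "csphere = {z. (\<Sum>k\<in>UNIV. (cmod (z $ k))^2) = 1}"

definition norm4_4 :: "complex ^ 'n \<Rightarrow> real" where
  "norm4_4 z = (\<Sum>k\<in>UNIV. (cmod (z $ k))^4)"

definition fobj :: "complex ^ 'n \<Rightarrow> real \<Rightarrow> complex ^ 'n \<Rightarrow> real" where
  "fobj a \<beta> z = (1/2) * (cmod (inner_aH a z))^2 + (\<beta>/2) * norm4_4 z"

definition local_min_on_sphere :: "complex ^ 'n \<Rightarrow> real \<Rightarrow> complex ^ 'n \<Rightarrow> bool" where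
  "local_min_on_sphere a \<beta> z \<longleftrightarrow> z \<in> csphere \<and>
     (\<exists>e>0. \<forall>w\<in>csphere. dist w z < e \<longrightarrow> fobj a \<beta> z \<le> fobj a \<beta> w)"

definition stationary :: "complex ^ 'n \<Rightarrow> real \<Rightarrow> complex ^ 'n \<Rightarrow> bool" where
  "stationary a \<beta> z \<longleftrightarrow> z \<in> csphere \<and>
     (\<forall>k. inner_aH a z * a $ k + 2 * complex_of_real \<beta> * complex_of_real ((cmod (z $ k))^2) * z $ k
          = complex_of_real ((cmod (inner_aH a z))^2 + 2 * \<beta> * norm4_4 z) * z $ k)"

definition consistent :: "complex ^ 'n \<Rightarrow> real \<Rightarrow> complex ^ 'n \<Rightarrow> bool" where
  "consistent a \<beta> z \<longleftrightarrow> stationary a \<beta> z \<and>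
     (\<forall>k. (a $ k \<noteq> 0 \<longrightarrow> cnj (a $ k) * z $ k \<in> \<real>) \<and> (a $ k = 0 \<longrightarrow> z $ k \<in> \<real>))"

end

theory Submission
  imports Defs
begin

text \<open>Replacing \<open>z\<close> by \<open>-z\<close> if necessary, \<open>a\<^sup>* z = c > 0\<close>, and consistency makes every
  product \<open>cnj a\<^sub>k z\<^sub>k\<close> real. Two descent arguments on the sphere show that at a local
  minimizer no coordinate vanishes and exactly one product, at an index \<open>k0\<close>, is positive.
  Multiplied by \<open>cnj z\<^sub>k\<close>, the stationarity equations become a real system for
  \<open>p\<^sub>k = |z\<^sub>k|\<close> in which only \<open>|a|\<close>, \<open>\<beta>\<close> and two unknown scalars enter. In it \<open>k0\<close> is
  forced to be the index where \<open>|a\<^sub>k|\<close> is strictly largest, and comparing two solutions by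
  monotonicity, according to how their scalars are ordered, shows that \<open>p\<close> is unique.\<close>

section \<open>The real moduli system\<close>

definition pivot_sign :: "'n \<Rightarrow> 'n \<Rightarrow> real" where
  "pivot_sign k0 k = (if k = k0 then 1 else -1)"

text \<open>For a consistent stationary point \<open>z\<close> with \<open>a\<^sup>* z > 0\<close>: \<open>r k = |a\<^sub>k|\<close>, \<open>P k = |z\<^sub>k|\<close>,
  \<open>s = a\<^sup>* z / (2 \<beta>)\<close>, \<open>m = \<lambda> / \<beta>\<close>, and \<open>cnj a\<^sub>k z\<^sub>k = pivot_sign k0 k * r k * P k\<close>.\<close>
definition moduli_system ::
    "('n::finite \<Rightarrow> real) \<Rightarrow> real \<Rightarrow> 'n \<Rightarrow> ('n \<Rightarrow> real) \<Rightarrow> real \<Rightarrow> real \<Rightarrow> bool" where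
  "moduli_system r \<beta> k0 P m s \<longleftrightarrow> 0 < s \<and> 0 < r k0 \<and> (\<forall>k. 0 \<le> r k) \<and> (\<forall>k. 0 < P k) \<and>
     (\<forall>k. s * pivot_sign k0 k * r k = P k * (m - (P k)\<^sup>2)) \<and>
     (\<Sum>k\<in>UNIV. pivot_sign k0 k * r k * P k) = 2 * \<beta> * s \<and> (\<Sum>k\<in>UNIV. (P k)\<^sup>2) = 1"

lemma moduli_systemD:
  assumes "moduli_system r \<beta> k0 P m s"
  shows "0 < s" "0 < r k0" "0 \<le> r k" "0 < P k"
    "(\<Sum>k\<in>UNIV. pivot_sign k0 k * r k * P k) = 2 * \<beta> * s" "(\<Sum>k\<in>UNIV. (P k)\<^sup>2) = 1"
  using assms unfolding moduli_system_def by auto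

lemma moduli_system_pivot_eq:
  assumes "moduli_system r \<beta> k0 P m s"
  shows "s * r k0 = P k0 * (m - (P k0)\<^sup>2)"
proof -
  have "s * pivot_sign k0 k0 * r k0 = P k0 * (m - (P k0)\<^sup>2)"
    using assms unfolding moduli_system_def by blast
  then show ?thesis by (simp add: pivot_sign_def)
qed

lemma moduli_system_off_pivot_eq:
  assumes "moduli_system r \<beta> k0 P m s" "k \<noteq> k0"
  shows "s * r k = P k * ((P k)\<^sup>2 - m)"
proof -
  have "s * pivot_sign k0 k * r k = P k * (m - (P k)\<^sup>2)"
    using assms(1) unfolding moduli_system_def by blast
  then show ?thesis using assms(2) by (simp add: pivot_sign_def algebra_simps)
qed

lemma moduli_system_order:
  assumes "moduli_system r \<beta> k0 P m s"
  shows "(P k0)\<^sup>2 < m" and "k \<noteq> k0 \<Longrightarrow> m \<le> (P k)\<^sup>2" and "k \<noteq> k0 \<Longrightarrow> P k0 < P k"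
proof -
  note sys = moduli_systemD[OF assms]
  have "0 < s * r k0" using sys(1,2) by simp
  then have "0 < P k0 * (m - (P k0)\<^sup>2)" by (simp only: moduli_system_pivot_eq[OF assms])
  then show pivot: "(P k0)\<^sup>2 < m" using sys(4)[of k0] by (simp add: zero_less_mult_iff)
  assume "k \<noteq> k0"
  have "0 \<le> s * r k" using sys(1,3) by simp
  then have "0 \<le> P k * ((P k)\<^sup>2 - m)" by (simp only: moduli_system_off_pivot_eq[OF assms \<open>k \<noteq> k0\<close>])
  then show "m \<le> (P k)\<^sup>2" using sys(4)[of k] by (simp add: zero_le_mult_iff)
  with pivot have "(P k0)\<^sup>2 < (P k)\<^sup>2" by simp
  then show "P k0 < P k" using sys(4)[of k] by (simp add: power_less_imp_less_base)
qed

lemma moduli_system_cross_sum: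
  assumes "moduli_system r \<beta> k0 P m s" "moduli_system r \<beta> k0 Q m' s'"
  shows "(\<Sum>k\<in>UNIV. P k * Q k * (m - (P k)\<^sup>2)) = 2 * \<beta> * s * s'"
proof -
  have "s * pivot_sign k0 k * r k = P k * (m - (P k)\<^sup>2)" for k
    using assms(1) unfolding moduli_system_def by blast
  then have "(\<Sum>k\<in>UNIV. P k * Q k * (m - (P k)\<^sup>2)) = (\<Sum>k\<in>UNIV. s * (pivot_sign k0 k * r k * Q k))"
    by (intro sum.cong) (simp_all add: ac_simps)
  also have "\<dots> = s * (\<Sum>k\<in>UNIV. pivot_sign k0 k * r k * Q k)"
    by (simp add: sum_distrib_left)
  also have "\<dots> = 2 * \<beta> * s * s'" using moduli_systemD(5)[OF assms(2)] by simp
  finally show ?thesis .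
qed

text \<open>If \<open>r k \<ge> r k0\<close> for some \<open>k \<noteq> k0\<close>, then \<open>P k > P k0\<close> makes the negative term
  \<open>-r k P k\<close> outweigh the only positive term \<open>r k0 P k0\<close> of the sum \<open>2 \<beta> s \<ge> 0\<close>.\<close>
lemma moduli_system_pivot_max:
  assumes "moduli_system r \<beta> k0 P m s" "0 \<le> \<beta>" "k \<noteq> k0"
  shows "r k < r k0"
proof (rule ccontr)
  assume "\<not> r k < r k0"
  note sys = moduli_systemD[OF assms(1)]
  have "r k0 * P k0 < r k * P k"
    using \<open>\<not> r k < r k0\<close> moduli_system_order(3)[OF assms(1,3)] sys(2) sys(4)[of k0]
    by (intro mult_le_less_imp_less) auto
  have "(\<Sum>j\<in>UNIV. pivot_sign k0 j * r j * P j)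
      \<le> (\<Sum>j\<in>UNIV. (if j = k0 then r k0 * P k0 else 0) - (if j = k then r k * P k else 0))"
    using assms(3) sys(3,4) by (intro sum_mono) (auto simp: pivot_sign_def less_imp_le)
  also have "\<dots> = r k0 * P k0 - r k * P k" by (simp add: sum_subtractf)
  finally have "2 * \<beta> * s < 0" using sys(5) \<open>r k0 * P k0 < r k * P k\<close> by linarith
  then show False using sys(1) assms(2) by (simp add: mult_less_0_iff)
qed

lemma moduli_system_pivot_unique:
  assumes "moduli_system r \<beta> k0 P m s" "moduli_system r \<beta> k1 Q m' s'" "0 \<le> \<beta>"
  shows "k1 = k0"
proof (rule ccontr)
  assume "k1 \<noteq> k0"
  then have "r k1 < r k0" "r k0 < r k1"
    using moduli_system_pivot_max[OF assms(1,3)] moduli_system_pivot_max[OF assms(2,3)] by auto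
  then show False by simp
qed

lemma sum_power2_eq_imp_eq:
  fixes P Q :: "'a \<Rightarrow> real"
  assumes "finite A" "\<And>k. k \<in> A \<Longrightarrow> 0 \<le> P k" "\<And>k. k \<in> A \<Longrightarrow> P k \<le> Q k"
    and "(\<Sum>k\<in>A. (P k)\<^sup>2) = (\<Sum>k\<in>A. (Q k)\<^sup>2)" "k \<in> A"
  shows "P k = Q k"
proof -
  have nonneg: "0 \<le> (Q j)\<^sup>2 - (P j)\<^sup>2" if "j \<in> A" for j
    using assms(2,3) that by (simp add: power_mono)
  have "(\<Sum>j\<in>A. (Q j)\<^sup>2 - (P j)\<^sup>2) = 0" using assms(4) by (simp add: sum_subtractf)
  then have "(Q k)\<^sup>2 - (P k)\<^sup>2 = 0"
    using sum_nonneg_eq_0_iff[of A "\<lambda>j. (Q j)\<^sup>2 - (P j)\<^sup>2"] assms(1,5) nonneg by blast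
  moreover have "0 \<le> P k" "0 \<le> Q k" using assms(2,3,5) by (auto intro: order_trans)
  ultimately show ?thesis by (simp add: power2_eq_iff_nonneg)
qed

text \<open>Off the pivot \<open>p = P k\<close> solves \<open>p (p\<^sup>2 - m) = s r k\<close> on the branch \<open>p\<^sup>2 \<ge> m\<close>, where the
  left side increases in \<open>p\<close> and decreases in \<open>m\<close>; so \<open>P \<le> Q\<close> there. The sum equation
  then gives \<open>P \<le> Q\<close> at the pivot as well, and the normalisation forces \<open>P = Q\<close>.\<close>
lemma moduli_system_eq_if_le:
  assumes sysP: "moduli_system r \<beta> k0 P m s" and sysQ: "moduli_system r \<beta> k0 Q m' s'"
    and "m \<le> m'" "s \<le> s'" "0 \<le> \<beta>"
  shows "P = Q"
proof -
  note P = moduli_systemD[OF sysP] and Q = moduli_systemD[OF sysQ]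
  have off_pivot: "P k \<le> Q k" if k: "k \<noteq> k0" for k
  proof (rule ccontr)
    assume "\<not> P k \<le> Q k"
    then have "(Q k)\<^sup>2 < (P k)\<^sup>2" using Q(4)[of k] by (simp add: power_strict_mono)
    then have "(Q k)\<^sup>2 - m' < (P k)\<^sup>2 - m" using \<open>m \<le> m'\<close> by simp
    have "s * r k \<le> s' * r k" using \<open>s \<le> s'\<close> P(3)[of k] by (rule mult_right_mono)
    also have "\<dots> = Q k * ((Q k)\<^sup>2 - m')" by (rule moduli_system_off_pivot_eq[OF sysQ k])
    also have "\<dots> < Q k * ((P k)\<^sup>2 - m)"
      using \<open>(Q k)\<^sup>2 - m' < (P k)\<^sup>2 - m\<close> Q(4)[of k] by (rule mult_strict_left_mono)
    also have "\<dots> \<le> P k * ((P k)\<^sup>2 - m)"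
      using \<open>\<not> P k \<le> Q k\<close> moduli_system_order(2)[OF sysP k] by (intro mult_right_mono) auto
    also have "\<dots> = s * r k" by (rule moduli_system_off_pivot_eq[OF sysP k, symmetric])
    finally show False by simp
  qed
  have "0 \<le> 2 * \<beta> * (s' - s)" using \<open>s \<le> s'\<close> \<open>0 \<le> \<beta>\<close> by simp
  also have "\<dots> = (\<Sum>j\<in>UNIV. pivot_sign k0 j * r j * (Q j - P j))"
    using P(5) Q(5) by (simp add: algebra_simps sum_subtractf)
  also have "\<dots> \<le> (\<Sum>j\<in>UNIV. if j = k0 then r k0 * (Q k0 - P k0) else 0)"
    using off_pivot P(3) by (intro sum_mono) (auto simp: pivot_sign_def mult_nonneg_nonneg)
  also have "\<dots> = r k0 * (Q k0 - P k0)" by simp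
  finally have "0 \<le> r k0 * (Q k0 - P k0)" .
  then have "P k0 \<le> Q k0" using P(2) by (simp add: zero_le_mult_iff)
  then have le: "P k \<le> Q k" for k using off_pivot by (cases "k = k0") auto
  show "P = Q"
  proof
    fix k
    show "P k = Q k"
      using sum_power2_eq_imp_eq[of UNIV P Q k] P(4,6) Q(6) le by (simp add: less_imp_le)
  qed
qed

text \<open>By the cross sums, \<open>\<Sum>k. P k Q k ((m' - m) - ((Q k)\<^sup>2 - (P k)\<^sup>2)) = 0\<close>. Off the pivot
  the bracket is nonnegative and \<open>P k Q k\<close> exceeds its pivot value, while the brackets
  sum to \<open>n (m' - m) > 0\<close>.\<close>
lemma moduli_system_not_crossing:
  fixes P Q :: "'n::finite \<Rightarrow> real"
  assumes sysP: "moduli_system r \<beta> k0 P m s" and sysQ: "moduli_system r \<beta> k0 Q m' s'"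
    and "m < m'" "s' < s"
  shows False
proof -
  note P = moduli_systemD[OF sysP] and Q = moduli_systemD[OF sysQ]
  define E where "E k = (m' - m) - ((Q k)\<^sup>2 - (P k)\<^sup>2)" for k
  define q where "q k = P k * Q k" for k
  have E_nonneg: "0 \<le> E k" if k: "k \<noteq> k0" for k
  proof (rule ccontr)
    assume "\<not> 0 \<le> E k"
    then have gt: "(P k)\<^sup>2 - m < (Q k)\<^sup>2 - m'" unfolding E_def by simp
    then have "(P k)\<^sup>2 < (Q k)\<^sup>2" using \<open>m < m'\<close> by simp
    then have "P k < Q k" using Q(4)[of k] by (simp add: power_less_imp_less_base)
    have "s' * r k \<le> s * r k" using \<open>s' < s\<close> P(3)[of k] by (intro mult_right_mono) auto
    also have "\<dots> = P k * ((P k)\<^sup>2 - m)" by (rule moduli_system_off_pivot_eq[OF sysP k])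
    also have "\<dots> \<le> P k * ((Q k)\<^sup>2 - m')" using gt P(4)[of k] by (intro mult_left_mono) auto
    also have "\<dots> < Q k * ((Q k)\<^sup>2 - m')"
      using \<open>P k < Q k\<close> gt moduli_system_order(2)[OF sysP k] by (intro mult_strict_right_mono) auto
    also have "\<dots> = s' * r k" by (rule moduli_system_off_pivot_eq[OF sysQ k, symmetric])
    finally show False by simp
  qed
  have q_ge: "q k0 \<le> q k" for k
  proof (cases "k = k0")
    case False
    then show ?thesis unfolding q_def
      using moduli_system_order(3)[OF sysP False] moduli_system_order(3)[OF sysQ False] P(4) Q(4)
      by (intro mult_mono) (auto simp: less_imp_le)
  qed simp
  have "(\<Sum>k\<in>UNIV. q k * E k)
      = (\<Sum>k\<in>UNIV. Q k * P k * (m' - (Q k)\<^sup>2)) - (\<Sum>k\<in>UNIV. P k * Q k * (m - (P k)\<^sup>2))"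
    unfolding q_def E_def sum_subtractf[symmetric] by (intro sum.cong) (simp_all add: algebra_simps)
  also have "\<dots> = 0"
    using moduli_system_cross_sum[OF sysP sysQ] moduli_system_cross_sum[OF sysQ sysP] by simp
  finally have "(\<Sum>k\<in>UNIV. q k * E k) = 0" .
  have "0 < q k0 * (real CARD('n) * (m' - m))"
    unfolding q_def using P(4)[of k0] Q(4)[of k0] \<open>m < m'\<close> by (intro mult_pos_pos) simp_all
  also have "\<dots> = (\<Sum>k\<in>UNIV. q k0 * E k)"
    unfolding E_def using P(6) Q(6) by (simp add: sum_distrib_left[symmetric] sum_subtractf)
  also have "\<dots> \<le> (\<Sum>k\<in>UNIV. q k * E k)"
    using q_ge E_nonneg by (intro sum_mono) (metis mult_right_mono order_refl)
  finally show False using \<open>(\<Sum>k\<in>UNIV. q k * E k) = 0\<close> by simp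
qed

lemma moduli_system_unique:
  assumes "moduli_system r \<beta> k0 P m s" "moduli_system r \<beta> k1 Q m' s'" "0 \<le> \<beta>"
  shows "P = Q"
proof -
  have sysQ: "moduli_system r \<beta> k0 Q m' s'"
    using assms(2) moduli_system_pivot_unique[OF assms] by simp
  consider "m \<le> m'" "s \<le> s'" | "m' \<le> m" "s' \<le> s" | "m < m'" "s' < s" | "m' < m" "s < s'"
    by linarith
  then show ?thesis
  proof cases
    case 1
    then show ?thesis using moduli_system_eq_if_le[OF assms(1) sysQ _ _ assms(3)] by blast
  next
    case 2
    then show ?thesis using moduli_system_eq_if_le[OF sysQ assms(1) _ _ assms(3)] by blast
  next
    case 3
    then show ?thesis using moduli_system_not_crossing[OF assms(1) sysQ] by blast
  next
    case 4
    then show ?thesis using moduli_system_not_crossing[OF sysQ assms(1)] by blast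
  qed
qed


section \<open>Descent directions on the complex sphere\<close>

lemma eventually_at_right_0_mult_less:
  fixes A B :: real
  assumes "0 < B"
  shows "\<forall>\<^sub>F x in at_right 0. x * A < B"
proof -
  have "((\<lambda>x. x * A) \<longlongrightarrow> 0 * A) (at_right 0)" by (intro tendsto_intros)
  then show ?thesis using assms by (simp add: order_tendstoD(2))
qed

lemma one_minus_sqrt_one_minus_bounds:
  fixes t :: real
  assumes "0 \<le> t" "t \<le> 1"
  shows "0 \<le> 1 - sqrt (1 - t)" "1 - sqrt (1 - t) \<le> t" "(1 - sqrt (1 - t))\<^sup>2 \<le> t"
proof -
  show nonneg: "0 \<le> 1 - sqrt (1 - t)" using assms by simp
  have "(1 - t) * (1 - t) \<le> 1 * (1 - t)" using assms by (intro mult_right_mono) auto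
  then have "(1 - t)\<^sup>2 \<le> 1 - t" by (simp add: power2_eq_square)
  then have "1 - t \<le> sqrt (1 - t)" by (rule real_le_rsqrt)
  then show le: "1 - sqrt (1 - t) \<le> t" by simp
  have "(1 - sqrt (1 - t)) * (1 - sqrt (1 - t)) \<le> 1 * (1 - sqrt (1 - t))"
    using nonneg le assms by (intro mult_right_mono) auto
  with le show "(1 - sqrt (1 - t))\<^sup>2 \<le> t" by (simp add: power2_eq_square)
qed

lemma unit_complex_near_one:
  fixes x :: real
  assumes "x\<^sup>2 \<le> 1"
  shows "cmod (Complex (sqrt (1 - x\<^sup>2)) x) = 1" "(cmod (Complex (sqrt (1 - x\<^sup>2)) x - 1))\<^sup>2 \<le> 2 * x\<^sup>2"
proof -
  show "cmod (Complex (sqrt (1 - x\<^sup>2)) x) = 1" using assms by (simp add: cmod_def)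
  have "(cmod (Complex (sqrt (1 - x\<^sup>2)) x - 1))\<^sup>2 = (1 - sqrt (1 - x\<^sup>2))\<^sup>2 + x\<^sup>2"
    by (simp add: cmod_def power2_commute)
  also have "\<dots> \<le> 2 * x\<^sup>2" using one_minus_sqrt_one_minus_bounds(3)[of "x\<^sup>2"] assms by simp
  finally show "(cmod (Complex (sqrt (1 - x\<^sup>2)) x - 1))\<^sup>2 \<le> 2 * x\<^sup>2" .
qed

lemma local_min_on_sphereE:
  assumes "local_min_on_sphere a \<beta> z"
  obtains \<delta> where "0 < \<delta>"
    "\<And>w. w \<in> csphere \<Longrightarrow> (\<Sum>k\<in>UNIV. (cmod (w $ k - z $ k))\<^sup>2) < \<delta> \<Longrightarrow> fobj a \<beta> z \<le> fobj a \<beta> w"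
proof -
  obtain e where "0 < e" and e: "\<forall>w\<in>csphere. dist w z < e \<longrightarrow> fobj a \<beta> z \<le> fobj a \<beta> w"
    using assms unfolding local_min_on_sphere_def by blast
  show ?thesis
  proof
    show "0 < e\<^sup>2" using \<open>0 < e\<close> by simp
    fix w assume "w \<in> csphere" and close: "(\<Sum>k\<in>UNIV. (cmod (w $ k - z $ k))\<^sup>2) < e\<^sup>2"
    from close have "sqrt (\<Sum>k\<in>UNIV. (cmod (w $ k - z $ k))\<^sup>2) < sqrt (e\<^sup>2)"
      by (rule real_sqrt_less_mono)
    then have "dist w z < e" using \<open>0 < e\<close> by (simp add: dist_vec_def L2_set_def dist_norm)
    then show "fobj a \<beta> z \<le> fobj a \<beta> w" using e \<open>w \<in> csphere\<close> by simp
  qed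
qed

lemma csphere_coord_le_1:
  assumes "z \<in> csphere"
  shows "(cmod (z $ k))\<^sup>2 \<le> 1"
proof -
  have "(cmod (z $ k))\<^sup>2 \<le> (\<Sum>j\<in>UNIV. (cmod (z $ j))\<^sup>2)" by (rule member_le_sum) auto
  then show ?thesis using assms unfolding csphere_def by simp
qed

lemma obtain_small_at_right_0:
  assumes "\<forall>\<^sub>F x in at_right (0::real). P x"
  obtains x where "0 < x" "P x"
  using eventually_happens'[OF trivial_limit_at_right_real eventually_conj[OF eventually_at_right_less assms]]
  by blast

definition shift_mass :: "real \<Rightarrow> 'n \<Rightarrow> complex ^ 'n \<Rightarrow> complex ^ 'n" where
  "shift_mass S k z = (\<chi> j. of_real (sqrt (1 - S)) * z $ j + (if j = k then of_real (sqrt S) else 0))"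

lemma cmod_shift_mass:
  assumes "z $ k = 0" "0 \<le> S" "S \<le> 1"
  shows "(cmod (shift_mass S k z $ j))\<^sup>2 = (1 - S) * (cmod (z $ j))\<^sup>2 + (if j = k then S else 0)"
  using assms by (cases "j = k") (simp_all add: shift_mass_def norm_mult power_mult_distrib)

lemma shift_mass_mem_csphere:
  assumes "z \<in> csphere" "z $ k = 0" "0 \<le> S" "S \<le> 1"
  shows "shift_mass S k z \<in> csphere"
  using assms by (simp add: csphere_def cmod_shift_mass sum.distrib sum_distrib_left[symmetric])

lemma shift_mass_dist_sum:
  assumes "z \<in> csphere" "z $ k = 0" "0 \<le> S" "S \<le> 1"
  shows "(\<Sum>j\<in>UNIV. (cmod (shift_mass S k z $ j - z $ j))\<^sup>2) \<le> 2 * S"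
proof -
  have "cmod (of_real (1 - sqrt (1 - S))) = 1 - sqrt (1 - S)"
    using assms(3,4) by (simp only: norm_of_real) simp
  then have "(cmod (shift_mass S k z $ j - z $ j))\<^sup>2
      = (1 - sqrt (1 - S))\<^sup>2 * (cmod (z $ j))\<^sup>2 + (if j = k then S else 0)" for j
  proof (cases "j = k")
    case True
    then show ?thesis using assms(2,3) by (simp add: shift_mass_def)
  next
    case False
    then have "shift_mass S k z $ j - z $ j = - of_real (1 - sqrt (1 - S)) * z $ j"
      by (simp add: shift_mass_def algebra_simps)
    with False \<open>cmod (of_real (1 - sqrt (1 - S))) = 1 - sqrt (1 - S)\<close> show ?thesis
      by (simp add: norm_mult power_mult_distrib del: of_real_diff)
  qed
  then have "(\<Sum>j\<in>UNIV. (cmod (shift_mass S k z $ j - z $ j))\<^sup>2) = (1 - sqrt (1 - S))\<^sup>2 + S"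
    using assms(1) by (simp add: csphere_def sum.distrib sum_distrib_left[symmetric])
  also have "\<dots> \<le> 2 * S" using one_minus_sqrt_one_minus_bounds(3)[OF assms(3,4)] by simp
  finally show ?thesis .
qed

lemma inner_aH_shift_mass:
  assumes "a $ k = 0"
  shows "inner_aH a (shift_mass S k z) = of_real (sqrt (1 - S)) * inner_aH a z"
proof -
  have "cnj (a $ j) * shift_mass S k z $ j = of_real (sqrt (1 - S)) * (cnj (a $ j) * z $ j)" for j
    using assms by (cases "j = k") (simp_all add: shift_mass_def algebra_simps)
  then show ?thesis unfolding inner_aH_def sum_distrib_left by presburger
qed

lemma norm4_4_shift_mass:
  assumes "z $ k = 0" "0 \<le> S" "S \<le> 1"
  shows "norm4_4 (shift_mass S k z) = (1 - S)\<^sup>2 * norm4_4 z + S\<^sup>2"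
proof -
  have fourth: "x ^ 4 = (x\<^sup>2)\<^sup>2" for x :: real by (simp flip: power_mult)
  have "(cmod (shift_mass S k z $ j))^4 = (1 - S)\<^sup>2 * (cmod (z $ j))^4 + (if j = k then S\<^sup>2 else 0)" for j
    unfolding fourth cmod_shift_mass[OF assms] using assms(1)
    by (cases "j = k") (simp_all add: power_mult_distrib)
  then show ?thesis by (simp add: norm4_4_def sum.distrib sum_distrib_left)
qed

text \<open>Moving mass \<open>S\<close> into a vanishing coordinate orthogonal to \<open>a\<close> lowers \<open>|a\<^sup>* z|\<^sup>2\<close> by
  \<open>S |a\<^sup>* z|\<^sup>2\<close>, while \<open>\<parallel>z\<parallel>\<^sub>4\<^sup>4\<close> changes by \<open>-2 S \<parallel>z\<parallel>\<^sub>4\<^sup>4 + O(S\<^sup>2)\<close>.\<close>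
lemma local_min_on_sphere_coord_nonzero:
  assumes "0 \<le> \<beta>" "local_min_on_sphere a \<beta> z" "inner_aH a z \<noteq> 0" "a $ k = 0"
  shows "z $ k \<noteq> 0"
proof
  assume "z $ k = 0"
  obtain \<delta> where "0 < \<delta>"
    and min: "\<And>w. w \<in> csphere \<Longrightarrow> (\<Sum>j\<in>UNIV. (cmod (w $ j - z $ j))\<^sup>2) < \<delta> \<Longrightarrow> fobj a \<beta> z \<le> fobj a \<beta> w"
    using local_min_on_sphereE[OF assms(2)] by blast
  have "z \<in> csphere" using assms(2) unfolding local_min_on_sphere_def by blast
  define C where "C = (cmod (inner_aH a z))\<^sup>2"
  define N where "N = norm4_4 z"
  have "0 < C" using assms(3) by (simp add: C_def)
  have "0 \<le> N" unfolding N_def norm4_4_def by (simp add: sum_nonneg)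
  have "\<forall>\<^sub>F S in at_right 0. S * 1 < 1 \<and> S * 2 < \<delta> \<and> S * (\<beta> * (N + 1)) < C"
    using \<open>0 < \<delta>\<close> \<open>0 < C\<close> by (intro eventually_conj eventually_at_right_0_mult_less) auto
  then obtain S where "0 < S" "S < 1" "2 * S < \<delta>" "S * (\<beta> * (N + 1)) < C"
    by (rule obtain_small_at_right_0) auto
  define w where "w = shift_mass S k z"
  have inner_w: "(cmod (inner_aH a w))\<^sup>2 = (1 - S) * C"
    using \<open>S < 1\<close> by (simp add: w_def inner_aH_shift_mass[OF assms(4)] C_def norm_mult power_mult_distrib)
  have norm4_w: "norm4_4 w = (1 - S)\<^sup>2 * N + S\<^sup>2"
    using \<open>z $ k = 0\<close> \<open>0 < S\<close> \<open>S < 1\<close> by (simp add: w_def N_def norm4_4_shift_mass)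
  have "fobj a \<beta> w - fobj a \<beta> z = S / 2 * (S * (\<beta> * (N + 1)) - C - 2 * \<beta> * N)"
    unfolding fobj_def inner_w norm4_w C_def[symmetric] N_def[symmetric] by (simp add: power2_eq_square field_simps)
  moreover have "S * (\<beta> * (N + 1)) - C - 2 * \<beta> * N < 0"
    using \<open>S * (\<beta> * (N + 1)) < C\<close> mult_nonneg_nonneg[OF \<open>0 \<le> \<beta>\<close> \<open>0 \<le> N\<close>] by linarith
  then have "S / 2 * (S * (\<beta> * (N + 1)) - C - 2 * \<beta> * N) < 0"
    using \<open>0 < S\<close> by (intro mult_pos_neg) simp_all
  ultimately have "fobj a \<beta> w < fobj a \<beta> z" by linarith
  moreover have "w \<in> csphere"
    using \<open>z \<in> csphere\<close> \<open>z $ k = 0\<close> \<open>0 < S\<close> \<open>S < 1\<close> by (simp add: w_def shift_mass_mem_csphere)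
  moreover have "(\<Sum>j\<in>UNIV. (cmod (w $ j - z $ j))\<^sup>2) < \<delta>"
    using shift_mass_dist_sum[OF \<open>z \<in> csphere\<close> \<open>z $ k = 0\<close>, of S] \<open>0 < S\<close> \<open>S < 1\<close> \<open>2 * S < \<delta>\<close>
    by (simp add: w_def)
  ultimately show False using min by fastforce
qed

definition rotate_phases :: "('n \<Rightarrow> complex) \<Rightarrow> complex ^ 'n \<Rightarrow> complex ^ 'n" where
  "rotate_phases g z = (\<chi> k. g k * z $ k)"

lemma cmod_rotate_phases:
  assumes "\<And>k. cmod (g k) = 1"
  shows "cmod (rotate_phases g z $ k) = cmod (z $ k)"
  using assms by (simp add: rotate_phases_def norm_mult)

lemma rotate_phases_mem_csphere:
  "(\<And>k. cmod (g k) = 1) \<Longrightarrow> z \<in> csphere \<Longrightarrow> rotate_phases g z \<in> csphere"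
  by (simp add: csphere_def cmod_rotate_phases)

lemma norm4_4_rotate_phases:
  "(\<And>k. cmod (g k) = 1) \<Longrightarrow> norm4_4 (rotate_phases g z) = norm4_4 z"
  by (simp add: norm4_4_def cmod_rotate_phases)

lemma inner_aH_rotate_phases:
  "inner_aH a (rotate_phases g z) = (\<Sum>k\<in>UNIV. g k * (cnj (a $ k) * z $ k))"
  by (simp add: inner_aH_def rotate_phases_def ac_simps)

lemma rotate_phases_dist_sum:
  assumes "z \<in> csphere"
  shows "(\<Sum>k\<in>UNIV. (cmod (rotate_phases g z $ k - z $ k))\<^sup>2) \<le> (\<Sum>k\<in>UNIV. (cmod (g k - 1))\<^sup>2)"
proof (rule sum_mono)
  fix k
  have "rotate_phases g z $ k - z $ k = (g k - 1) * z $ k"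
    by (simp add: rotate_phases_def algebra_simps)
  then have "(cmod (rotate_phases g z $ k - z $ k))\<^sup>2 = (cmod (g k - 1))\<^sup>2 * (cmod (z $ k))\<^sup>2"
    by (simp add: norm_mult power_mult_distrib)
  also have "\<dots> \<le> (cmod (g k - 1))\<^sup>2"
    using csphere_coord_le_1[OF assms] by (simp add: mult_left_le)
  finally show "(cmod (rotate_phases g z $ k - z $ k))\<^sup>2 \<le> (cmod (g k - 1))\<^sup>2" .
qed

lemma inner_aH_rotate_two_phases:
  assumes "i \<noteq> j"
  shows "inner_aH a (rotate_phases ((\<lambda>_. 1)(i := u, j := v)) z)
    = inner_aH a z + (u - 1) * (cnj (a $ i) * z $ i) + (v - 1) * (cnj (a $ j) * z $ j)"
proof -
  have "((\<lambda>_. 1)(i := u, j := v)) k * (cnj (a $ k) * z $ k) = cnj (a $ k) * z $ k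
      + ((if k = i then (u - 1) * (cnj (a $ i) * z $ i) else 0)
      + (if k = j then (v - 1) * (cnj (a $ j) * z $ j) else 0))" for k
    using assms by (auto simp: algebra_simps)
  then have "(\<Sum>k\<in>UNIV. ((\<lambda>_. 1)(i := u, j := v)) k * (cnj (a $ k) * z $ k))
      = (\<Sum>k\<in>UNIV. cnj (a $ k) * z $ k)
        + ((u - 1) * (cnj (a $ i) * z $ i) + (v - 1) * (cnj (a $ j) * z $ j))"
    by (simp add: sum.distrib)
  then show ?thesis by (simp add: inner_aH_rotate_phases inner_aH_def[of a z] add.assoc)
qed

lemma rotate_two_phases_dist_sum:
  assumes "i \<noteq> j" "z \<in> csphere"
  shows "(\<Sum>k\<in>UNIV. (cmod (rotate_phases ((\<lambda>_. 1)(i := u, j := v)) z $ k - z $ k))\<^sup>2)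
    \<le> (cmod (u - 1))\<^sup>2 + (cmod (v - 1))\<^sup>2"
proof -
  have "(cmod (((\<lambda>_. 1)(i := u, j := v)) k - 1))\<^sup>2
      = (if k = i then (cmod (u - 1))\<^sup>2 else 0) + (if k = j then (cmod (v - 1))\<^sup>2 else 0)" for k
    using assms(1) by simp
  then have "(\<Sum>k\<in>UNIV. (cmod (((\<lambda>_. 1)(i := u, j := v)) k - 1))\<^sup>2)
      = (cmod (u - 1))\<^sup>2 + (cmod (v - 1))\<^sup>2"
    by (simp add: sum.distrib)
  then show ?thesis using rotate_phases_dist_sum[OF assms(2)] by metis
qed

text \<open>If \<open>a\<^sup>* z = c > 0\<close> had two positive summands \<open>t\<^sub>i\<close> and \<open>t\<^sub>j\<close>, turning \<open>z\<^sub>i\<close> and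
  \<open>z\<^sub>j\<close> by small opposite angles, with sines in ratio \<open>t\<^sub>j : t\<^sub>i\<close>, keeps \<open>a\<^sup>* z\<close> real, makes
  it smaller, and leaves all moduli unchanged.\<close>
lemma local_min_on_sphere_positive_product_unique:
  assumes "local_min_on_sphere a \<beta> z" "inner_aH a z = of_real c" "0 < c"
    and "cnj (a $ i) * z $ i = of_real ti" "0 < ti"
    and "cnj (a $ j) * z $ j = of_real tj" "0 < tj"
  shows "i = j"
proof (rule ccontr)
  assume "i \<noteq> j"
  obtain \<delta> where "0 < \<delta>"
    and min: "\<And>w. w \<in> csphere \<Longrightarrow> (\<Sum>k\<in>UNIV. (cmod (w $ k - z $ k))\<^sup>2) < \<delta> \<Longrightarrow> fobj a \<beta> z \<le> fobj a \<beta> w"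
    using local_min_on_sphereE[OF assms(1)] by blast
  have "z \<in> csphere" using assms(1) unfolding local_min_on_sphere_def by blast
  have "\<forall>\<^sub>F H in at_right 0. H * tj\<^sup>2 < 1 \<and> H * ti\<^sup>2 < 1 \<and> H * (ti * tj * (ti + tj)) < 2 * c
      \<and> H * (2 * (ti\<^sup>2 + tj\<^sup>2)) < \<delta>"
    using \<open>0 < \<delta>\<close> \<open>0 < c\<close> by (intro eventually_conj eventually_at_right_0_mult_less) auto
  then obtain H where "0 < H" "H * tj\<^sup>2 < 1" "H * ti\<^sup>2 < 1" "H * (ti * tj * (ti + tj)) < 2 * c"
    "H * (2 * (ti\<^sup>2 + tj\<^sup>2)) < \<delta>"
    by (rule obtain_small_at_right_0) auto
  define x1 x2 where "x1 = sqrt H * tj" and "x2 = - sqrt H * ti"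
  have x1_sq: "x1\<^sup>2 = H * tj\<^sup>2" and x2_sq: "x2\<^sup>2 = H * ti\<^sup>2"
    using \<open>0 < H\<close> by (simp_all add: x1_def x2_def power_mult_distrib)
  define \<xi>1 \<xi>2 where "\<xi>1 = sqrt (1 - x1\<^sup>2)" and "\<xi>2 = sqrt (1 - x2\<^sup>2)"
  note rot1 = unit_complex_near_one[of x1, folded \<xi>1_def]
    and rot2 = unit_complex_near_one[of x2, folded \<xi>2_def]
  define w where "w = rotate_phases ((\<lambda>_. 1)(i := Complex \<xi>1 x1, j := Complex \<xi>2 x2)) z"
  have unit: "cmod (((\<lambda>_. 1)(i := Complex \<xi>1 x1, j := Complex \<xi>2 x2)) k) = 1" for k
    using rot1(1) rot2(1) \<open>H * tj\<^sup>2 < 1\<close> \<open>H * ti\<^sup>2 < 1\<close> by (simp add: x1_sq x2_sq)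
  define c' where "c' = c - (1 - \<xi>1) * ti - (1 - \<xi>2) * tj"
  have inner_w: "inner_aH a w = of_real c'"
    unfolding w_def inner_aH_rotate_two_phases[OF \<open>i \<noteq> j\<close>] assms(2,4,6)
    by (simp add: c'_def x1_def x2_def complex_eq_iff algebra_simps)
  have "\<bar>c'\<bar> < c"
  proof -
    have "0 < (1 - \<xi>1) * ti" "0 < (1 - \<xi>2) * tj"
      using \<open>0 < H\<close> \<open>H * tj\<^sup>2 < 1\<close> \<open>H * ti\<^sup>2 < 1\<close> \<open>0 < ti\<close> \<open>0 < tj\<close>
      by (simp_all add: \<xi>1_def \<xi>2_def x1_sq x2_sq)
    moreover have "(1 - \<xi>1) * ti \<le> H * tj\<^sup>2 * ti" "(1 - \<xi>2) * tj \<le> H * ti\<^sup>2 * tj"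
      using one_minus_sqrt_one_minus_bounds(2)[of "x1\<^sup>2"] one_minus_sqrt_one_minus_bounds(2)[of "x2\<^sup>2"]
        \<open>0 < H\<close> \<open>H * tj\<^sup>2 < 1\<close> \<open>H * ti\<^sup>2 < 1\<close> \<open>0 < ti\<close> \<open>0 < tj\<close>
      by (auto simp: \<xi>1_def \<xi>2_def x1_sq x2_sq intro!: mult_right_mono)
    moreover have "H * tj\<^sup>2 * ti + H * ti\<^sup>2 * tj = H * (ti * tj * (ti + tj))"
      by (simp add: power2_eq_square algebra_simps)
    ultimately show ?thesis using \<open>H * (ti * tj * (ti + tj)) < 2 * c\<close> unfolding c'_def by linarith
  qed
  then have "\<bar>c'\<bar>\<^sup>2 < c\<^sup>2" by (rule power_strict_mono) simp_all
  moreover have "norm4_4 w = norm4_4 z"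
    unfolding w_def using unit by (rule norm4_4_rotate_phases)
  ultimately have "fobj a \<beta> w < fobj a \<beta> z"
    unfolding fobj_def inner_w assms(2) by simp
  moreover have "w \<in> csphere" using unit \<open>z \<in> csphere\<close> by (simp add: w_def rotate_phases_mem_csphere)
  moreover have "(\<Sum>k\<in>UNIV. (cmod (w $ k - z $ k))\<^sup>2) < \<delta>"
  proof -
    have "(cmod (Complex \<xi>1 x1 - 1))\<^sup>2 + (cmod (Complex \<xi>2 x2 - 1))\<^sup>2 \<le> 2 * x1\<^sup>2 + 2 * x2\<^sup>2"
      using rot1(2) rot2(2) \<open>H * tj\<^sup>2 < 1\<close> \<open>H * ti\<^sup>2 < 1\<close> by (simp add: x1_sq x2_sq add_mono)
    also have "\<dots> = H * (2 * (ti\<^sup>2 + tj\<^sup>2))" by (simp add: x1_sq x2_sq algebra_simps)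
    finally show ?thesis
      using rotate_two_phases_dist_sum[OF \<open>i \<noteq> j\<close> \<open>z \<in> csphere\<close>] \<open>H * (2 * (ti\<^sup>2 + tj\<^sup>2)) < \<delta>\<close>
      unfolding w_def by (meson le_less_trans order_trans)
  qed
  ultimately show False using min by fastforce
qed


section \<open>Consistent local minimizers\<close>

lemma inner_aH_uminus: "inner_aH a (- z) = - inner_aH a z"
  by (simp add: inner_aH_def sum_negf)

lemma norm4_4_uminus: "norm4_4 (- z) = norm4_4 z"
  by (simp add: norm4_4_def)

lemma uminus_mem_csphere_iff: "- z \<in> csphere \<longleftrightarrow> z \<in> csphere"
  by (simp add: csphere_def)

lemma fobj_uminus: "fobj a \<beta> (- z) = fobj a \<beta> z"
  by (simp add: fobj_def inner_aH_uminus norm4_4_uminus)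

lemma local_min_on_sphere_uminus:
  assumes "local_min_on_sphere a \<beta> z"
  shows "local_min_on_sphere a \<beta> (- z)"
proof -
  obtain e where "0 < e" and e: "\<forall>w\<in>csphere. dist w z < e \<longrightarrow> fobj a \<beta> z \<le> fobj a \<beta> w"
    and "z \<in> csphere"
    using assms unfolding local_min_on_sphere_def by blast
  have "fobj a \<beta> (- z) \<le> fobj a \<beta> w" if "w \<in> csphere" "dist w (- z) < e" for w
    using e[rule_format, of "- w"] that dist_minus[of w "- z"]
    by (simp add: uminus_mem_csphere_iff fobj_uminus)
  then show ?thesis
    using \<open>0 < e\<close> \<open>z \<in> csphere\<close> unfolding local_min_on_sphere_def uminus_mem_csphere_iff by blast
qed

lemma consistent_uminus:
  assumes "consistent a \<beta> z"
  shows "consistent a \<beta> (- z)"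
  using assms
  unfolding consistent_def stationary_def inner_aH_uminus norm4_4_uminus uminus_mem_csphere_iff
  by (simp add: Reals_minus_iff algebra_simps)

lemma consistent_product_real:
  "consistent a \<beta> z \<Longrightarrow> cnj (a $ k) * z $ k \<in> \<real>"
  unfolding consistent_def by (cases "a $ k = 0") auto

lemma consistent_inner_aH_real:
  "consistent a \<beta> z \<Longrightarrow> inner_aH a z \<in> \<real>"
  unfolding inner_aH_def by (intro sum_in_Reals consistent_product_real)

text \<open>Multiplying the stationarity equation at \<open>k\<close> by \<open>cnj (z\<^sub>k)\<close> leaves only real quantities.\<close>
lemma stationary_coord_eq:
  assumes "stationary a \<beta> z" "inner_aH a z = of_real c" "cnj (a $ k) * z $ k = of_real t"
  shows "c * t + 2 * \<beta> * (cmod (z $ k))^4 = (c\<^sup>2 + 2 * \<beta> * norm4_4 z) * (cmod (z $ k))\<^sup>2"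
proof -
  have p: "a $ k * cnj (z $ k) = of_real t"
    using arg_cong[OF assms(3), of cnj] by (simp add: mult.commute)
  have q: "z $ k * cnj (z $ k) = of_real ((cmod (z $ k))\<^sup>2)"
    by (rule complex_norm_square[symmetric])
  have "(of_real (c * t + 2 * \<beta> * (cmod (z $ k))^4) :: complex)
      = of_real c * (a $ k * cnj (z $ k))
        + 2 * of_real \<beta> * of_real ((cmod (z $ k))\<^sup>2) * (z $ k * cnj (z $ k))"
    unfolding p q by (simp add: power4_eq_xxxx power2_eq_square)
  also have "\<dots> = (inner_aH a z * a $ k + 2 * of_real \<beta> * of_real ((cmod (z $ k))\<^sup>2) * z $ k) * cnj (z $ k)"
    unfolding assms(2) by (simp add: algebra_simps)
  also have "\<dots> = of_real ((cmod (inner_aH a z))\<^sup>2 + 2 * \<beta> * norm4_4 z) * (z $ k * cnj (z $ k))"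
    using assms(1) unfolding stationary_def by (simp add: mult.assoc)
  also have "\<dots> = of_real ((c\<^sup>2 + 2 * \<beta> * norm4_4 z) * (cmod (z $ k))\<^sup>2)"
    unfolding q assms(2) by simp
  finally show ?thesis by (simp only: of_real_eq_iff)
qed

lemma stationary_local_min_coord_nonzero:
  assumes "0 \<le> \<beta>" "local_min_on_sphere a \<beta> z" "stationary a \<beta> z" "inner_aH a z \<noteq> 0"
  shows "z $ k \<noteq> 0"
proof
  assume "z $ k = 0"
  then have "inner_aH a z * a $ k = 0"
    using assms(3) unfolding stationary_def by (metis mult_zero_right add_0_right)
  then have "a $ k = 0" using assms(4) by simp
  with \<open>z $ k = 0\<close> show False using local_min_on_sphere_coord_nonzero[OF assms(1,2,4)] by blast
qed

lemma consistent_local_min_pivot: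
  assumes "local_min_on_sphere a \<beta> z" "consistent a \<beta> z" "inner_aH a z = of_real c" "0 < c"
  obtains k0 where "0 < cmod (a $ k0)"
    "\<And>k. cnj (a $ k) * z $ k = of_real (pivot_sign k0 k * cmod (a $ k) * cmod (z $ k))"
proof -
  define \<tau> where "\<tau> k = Re (cnj (a $ k) * z $ k)" for k
  have \<tau>: "cnj (a $ k) * z $ k = of_real (\<tau> k)" for k
    unfolding \<tau>_def using consistent_product_real[OF assms(2)] by (rule of_real_Re[symmetric])
  have "\<exists>k0. 0 < \<tau> k0"
  proof (rule ccontr)
    assume "\<nexists>k0. 0 < \<tau> k0"
    then have "(\<Sum>k\<in>UNIV. \<tau> k) \<le> 0" by (intro sum_nonpos) (simp add: not_less)
    moreover have "c = (\<Sum>k\<in>UNIV. \<tau> k)"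
      using assms(3) unfolding inner_aH_def \<tau> by (simp flip: of_real_sum)
    ultimately show False using \<open>0 < c\<close> by simp
  qed
  then obtain k0 where "0 < \<tau> k0" ..
  have \<tau>_sign: "\<tau> k = pivot_sign k0 k * cmod (a $ k) * cmod (z $ k)" for k
  proof -
    have abs_\<tau>: "\<bar>\<tau> k\<bar> = cmod (a $ k) * cmod (z $ k)"
      using arg_cong[OF \<tau>[of k], of cmod] by (simp add: norm_mult)
    show ?thesis
    proof (cases "k = k0")
      case True
      then show ?thesis using abs_\<tau> \<open>0 < \<tau> k0\<close> by (simp add: pivot_sign_def)
    next
      case False
      then have "\<not> 0 < \<tau> k"
        using local_min_on_sphere_positive_product_unique[OF assms(1,3,4) \<tau> _ \<tau> \<open>0 < \<tau> k0\<close>] by blast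
      then show ?thesis using abs_\<tau> False by (simp add: pivot_sign_def)
    qed
  qed
  have "0 < cmod (a $ k0)"
    using \<tau>_sign[of k0] \<open>0 < \<tau> k0\<close> by (simp add: pivot_sign_def zero_less_mult_iff)
  then show ?thesis using that \<tau> \<tau>_sign by presburger
qed

lemma consistent_local_min_moduli_system_pos:
  assumes "0 < \<beta>" "local_min_on_sphere a \<beta> z" "consistent a \<beta> z"
    and inner: "inner_aH a z = of_real c" and "0 < c"
  shows "\<exists>k0 m. moduli_system (\<lambda>k. cmod (a $ k)) \<beta> k0 (\<lambda>k. cmod (z $ k)) m (c / (2 * \<beta>))"
proof -
  define r P where "r k = cmod (a $ k)" and "P k = cmod (z $ k)" for k
  obtain k0 where "0 < r k0" and \<tau>: "\<And>k. cnj (a $ k) * z $ k = of_real (pivot_sign k0 k * r k * P k)"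
    using consistent_local_min_pivot[OF assms(2,3) inner \<open>0 < c\<close>] unfolding r_def P_def by blast
  have stat: "stationary a \<beta> z" using assms(3) unfolding consistent_def by blast
  have P_pos: "0 < P k" for k
    using stationary_local_min_coord_nonzero[OF _ assms(2) stat] assms(1) inner \<open>0 < c\<close>
    by (simp add: P_def)
  define L where "L = c\<^sup>2 + 2 * \<beta> * norm4_4 z"
  have "c / (2 * \<beta>) * pivot_sign k0 k * r k = P k * (L / (2 * \<beta>) - (P k)\<^sup>2)" for k
  proof -
    have "P k * (c * (pivot_sign k0 k * r k)) = c * (pivot_sign k0 k * r k * P k)"
      by (simp add: ac_simps)
    also have "\<dots> = L * (P k)\<^sup>2 - 2 * \<beta> * (P k)^4"
      using stationary_coord_eq[OF stat inner \<tau>[of k]] unfolding L_def P_def by simp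
    also have "\<dots> = P k * (P k * (L - 2 * \<beta> * (P k)\<^sup>2))"
      by (simp add: power2_eq_square power4_eq_xxxx algebra_simps)
    finally have "c * (pivot_sign k0 k * r k) = P k * (L - 2 * \<beta> * (P k)\<^sup>2)"
      using P_pos[of k] by simp
    then show ?thesis using assms(1) by (simp add: field_simps)
  qed
  moreover have "(\<Sum>k\<in>UNIV. pivot_sign k0 k * r k * P k) = 2 * \<beta> * (c / (2 * \<beta>))"
  proof -
    have "(\<Sum>k\<in>UNIV. pivot_sign k0 k * r k * P k) = c"
      using inner unfolding inner_aH_def \<tau> of_real_sum[symmetric] of_real_eq_iff .
    then show ?thesis using assms(1) by simp
  qed
  moreover have "(\<Sum>k\<in>UNIV. (P k)\<^sup>2) = 1"
    using assms(2) by (simp add: local_min_on_sphere_def csphere_def P_def)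
  moreover have "0 < c / (2 * \<beta>)" using \<open>0 < c\<close> assms(1) by simp
  ultimately have "moduli_system r \<beta> k0 P (L / (2 * \<beta>)) (c / (2 * \<beta>))"
    unfolding moduli_system_def using P_pos \<open>0 < r k0\<close> by (simp add: r_def)
  then show ?thesis unfolding r_def P_def by blast
qed

lemma consistent_local_min_moduli_system:
  assumes "0 < \<beta>" "local_min_on_sphere a \<beta> z" "consistent a \<beta> z" "inner_aH a z \<noteq> 0"
  obtains k0 m s where "moduli_system (\<lambda>k. cmod (a $ k)) \<beta> k0 (\<lambda>k. cmod (z $ k)) m s"
proof -
  define c where "c = Re (inner_aH a z)"
  have inner: "inner_aH a z = of_real c"
    unfolding c_def using consistent_inner_aH_real[OF assms(3)] by (rule of_real_Re[symmetric])
  consider "0 < c" | "c < 0" using assms(4) inner by fastforce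
  then show ?thesis
  proof cases
    case 1
    then show ?thesis using consistent_local_min_moduli_system_pos[OF assms(1-3) inner] that by blast
  next
    case 2
    have "inner_aH a (- z) = of_real (- c)" by (simp add: inner_aH_uminus inner)
    then show ?thesis
      using consistent_local_min_moduli_system_pos[OF assms(1) local_min_on_sphere_uminus[OF assms(2)]
          consistent_uminus[OF assms(3)]] 2 that
      by auto
  qed
qed

theorem theorem10:
  fixes a z y :: "complex ^ 'n" and \<beta> :: real
  assumes "\<beta> > 0"
    and "local_min_on_sphere a \<beta> z" and "consistent a \<beta> z" and "inner_aH a z \<noteq> 0"
    and "local_min_on_sphere a \<beta> y" and "consistent a \<beta> y" and "inner_aH a y \<noteq> 0"
  shows "\<forall>k. cmod (y $ k) = cmod (z $ k)"
proof -
  obtain k0 m s where "moduli_system (\<lambda>k. cmod (a $ k)) \<beta> k0 (\<lambda>k. cmod (z $ k)) m s"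
    using consistent_local_min_moduli_system[OF assms(1-4)] .
  moreover obtain k1 m' s' where "moduli_system (\<lambda>k. cmod (a $ k)) \<beta> k1 (\<lambda>k. cmod (y $ k)) m' s'"
    using consistent_local_min_moduli_system[OF assms(1,5-7)] .
  ultimately have "(\<lambda>k. cmod (y $ k)) = (\<lambda>k. cmod (z $ k))"
    using moduli_system_unique assms(1) by (metis less_imp_le)
  then show ?thesis by (simp add: fun_eq_iff)
qed

end
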